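(* Let $G\in\mathbb{R}^{n\times n}$ and $\overline G:=\Pi_{\mathfrak{B}_n}(G)$. Define $\Theta^G\in\mathbb{R}^{n\times n}$ by $\Theta^G_{ij}=1$ if $\overline G_{ij}=0$ and $\Theta^G_{ij}=0$ otherwise, and the linear operator $\Xi:\mathbb{R}^{n\times n}\to\mathbb{R}^{n\times n}$ by $\Xi(H):=H-\Theta^G\circ H$. Then the linear operator $\mathcal{P}:\mathbb{R}^{n\times n}\to\mathbb{R}^{n\times n}$, \[ \mathcal{P}(H):=\Xi(H)-\Xi\mathcal{B}^*(\mathcal{B}\Xi\mathcal{B}^* )^{\dagger}\mathcal{B}\Xi(H),\qquad H\in\mathbb{R}^{n\times n}, \] is the HS-Jacobian of $\Pi_{\mathfrak{B}_n}$ at $G$. Moreover, $\mathcal{P}$ is self-adjoint and positive semidefinite.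
   Context: $\mathfrak{B}_n:=\{X\in\mathbb{R}^{n\times n}\mid Xe=e,\ X^Te=e,\ X\ge0\}$ is the Birkhoff polytope ($e$ the all-ones vector in $\mathbb{R}^n$, $X\ge0$ entrywise), and $\Pi_{\mathfrak{B}_n}$ is the Euclidean (Frobenius-norm) projection onto it. $\circ$ is the Hadamard product. $\mathcal{B}:\mathbb{R}^{n\times n}\to\mathbb{R}^{2n}$, $\mathcal{B}(X):=[(Xe)^T\ (X^Te)^T]^T$, with adjoint $\mathcal{B}^*$ (w.r.t. the trace inner product), so that $\mathfrak{B}_n=\{X\mid \mathcal{B}X=[e^T\ e^T]^T,\ X\ge0\}$. $\dagger$ denotes the Moore–Penrose pseudo-inverse. HS-Jacobian: for a polyhedral set $D=\{x\in\mathbb{R}^N\mid Ax\ge b,\ Bx=d\}$ and a point $x$, with $I(x)=\{i\mid A_i\Pi_D(x)=b_i\}$ the active inequality indices at $\Pi_D(x)$ and $A_{I(x)}$ the corresponding rows of $A$, the HS-Jacobian of $\Pi_D$ at $x$ is $P_0:=I_N-[A_{I(x)}^T\ B^T]\left(\begin{bmatrix}A_{I(x)}\\ B\end{bmatrix}[A_{I(x)}^T\ B^T]\right)^{\dagger}\begin{bmatrix}A_{I(x)}\\ B\end{bmatrix}$. Here this is applied with $\mathbb{R}^{n\times n}\cong\mathbb{R}^{n^2}$, inequality constraints $X\ge 0$ (i.e., $A$ the identity, $b=0$) and equality constraints $\mathcal{B}X=[e^T\ e^T]^T$. *)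

theory Defs
  imports Complex_Main "Jordan_Normal_Form.Matrix"
begin

definition ones :: "nat \<Rightarrow> real vec" where
  "ones n = vec n (\<lambda>_. 1)"

definition pinv :: "real mat \<Rightarrow> real mat" where
  "pinv A = (THE X. X \<in> carrier_mat (dim_col A) (dim_row A) \<and>
      A * X * A = A \<and> X * A * X = X \<and>
      transpose_mat (A * X) = A * X \<and> transpose_mat (X * A) = X * A)"

definition euclid_proj :: "real vec set \<Rightarrow> real vec \<Rightarrow> real vec" where
  "euclid_proj D x = (THE y. y \<in> D \<and>
      (\<forall>z\<in>D. (x - y) \<bullet> (x - y) \<le> (x - z) \<bullet> (x - z)))"

definition polyhedron :: "real mat \<Rightarrow> real vec \<Rightarrow> real mat \<Rightarrow> real vec \<Rightarrow> real vec set" where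
  "polyhedron A b B d = {x \<in> carrier_vec (dim_col A).
      (\<forall>i<dim_row A. row A i \<bullet> x \<ge> b $ i) \<and> B *\<^sub>v x = d}"

definition active_set :: "real mat \<Rightarrow> real vec \<Rightarrow> real mat \<Rightarrow> real vec \<Rightarrow> real vec \<Rightarrow> nat set" where
  "active_set A b B d x =
     {i. i < dim_row A \<and> row A i \<bullet> euclid_proj (polyhedron A b B d) x = b $ i}"

definition hs_jacobian :: "real mat \<Rightarrow> real vec \<Rightarrow> real mat \<Rightarrow> real vec \<Rightarrow> real vec \<Rightarrow> real mat" where
  "hs_jacobian A b B d x =
     (let C = mat_of_rows (dim_col A)
                (map (row A) (filter (\<lambda>i. i \<in> active_set A b B d x) [0..<dim_row A]) @ rows B)
      in 1\<^sub>m (dim_col A) - transpose_mat C * pinv (C * transpose_mat C) * C)"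

definition frob_inner :: "real mat \<Rightarrow> real mat \<Rightarrow> real" where
  "frob_inner X Y = (\<Sum>i<dim_row X. \<Sum>j<dim_col X. X $$ (i, j) * Y $$ (i, j))"

definition birkhoff :: "nat \<Rightarrow> real mat set" where
  "birkhoff n = {X \<in> carrier_mat n n. X *\<^sub>v ones n = ones n \<and>
      transpose_mat X *\<^sub>v ones n = ones n \<and> (\<forall>i<n. \<forall>j<n. X $$ (i, j) \<ge> 0)}"

definition proj_birkhoff :: "nat \<Rightarrow> real mat \<Rightarrow> real mat" where
  "proj_birkhoff n G = (THE Y. Y \<in> birkhoff n \<and>
      (\<forall>Z\<in>birkhoff n. frob_inner (G - Y) (G - Y) \<le> frob_inner (G - Z) (G - Z)))"

text \<open>Identification R^{n x n} = R^{n^2} (row-major vectorisation) and its inverse.\<close>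
definition vec_of_mat :: "nat \<Rightarrow> real mat \<Rightarrow> real vec" where
  "vec_of_mat n X = vec (n * n) (\<lambda>k. X $$ (k div n, k mod n))"

definition mat_of_vec :: "nat \<Rightarrow> real vec \<Rightarrow> real mat" where
  "mat_of_vec n v = mat n n (\<lambda>(i, j). v $ (i * n + j))"

definition Bop :: "nat \<Rightarrow> real mat \<Rightarrow> real vec" where
  "Bop n X = (X *\<^sub>v ones n) @\<^sub>v (transpose_mat X *\<^sub>v ones n)"

definition Badj :: "nat \<Rightarrow> real vec \<Rightarrow> real mat" where
  "Badj n y = (THE Z. Z \<in> carrier_mat n n \<and>
      (\<forall>X\<in>carrier_mat n n. Bop n X \<bullet> y = frob_inner X Z))"

definition Bmat :: "nat \<Rightarrow> real mat" where
  "Bmat n = mat (2 * n) (n * n) (\<lambda>(r, k). Bop n (mat_of_vec n (unit_vec (n * n) k)) $ r)"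

definition op_mat :: "nat \<Rightarrow> (real vec \<Rightarrow> real vec) \<Rightarrow> real mat" where
  "op_mat m L = mat m m (\<lambda>(i, j). L (unit_vec m j) $ i)"

definition op_pinv :: "nat \<Rightarrow> (real vec \<Rightarrow> real vec) \<Rightarrow> real vec \<Rightarrow> real vec" where
  "op_pinv m L y = pinv (op_mat m L) *\<^sub>v y"

definition Theta :: "nat \<Rightarrow> real mat \<Rightarrow> real mat" where
  "Theta n G = mat n n (\<lambda>(i, j). if proj_birkhoff n G $$ (i, j) = 0 then 1 else 0)"

definition Xi :: "nat \<Rightarrow> real mat \<Rightarrow> real mat \<Rightarrow> real mat" where
  "Xi n G H = H - mat n n (\<lambda>(i, j). Theta n G $$ (i, j) * H $$ (i, j))"

definition Pop :: "nat \<Rightarrow> real mat \<Rightarrow> real mat \<Rightarrow> real mat" where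
  "Pop n G H = Xi n G H -
     Xi n G (Badj n (op_pinv (2 * n) (\<lambda>y. Bop n (Xi n G (Badj n y))) (Bop n (Xi n G H))))"

end

theory Submission
  imports Defs "HOL-Analysis.Function_Topology" "Jordan_Normal_Form.Matrix_Kernel"
begin

(* Both operators are the orthogonal projector onto
   V = {H | H_ij = 0 whenever Pi(G)_ij = 0, and B H = 0}.
   For the HS-Jacobian I - C^T (C C^T)^+ C this holds because V = ker C, where C stacks the rows
   of the identity indexed by the zero entries of Pi(G) on top of B. For
   P = Xi - Xi B^T (B Xi B^T)^+ B Xi, with Xi the 0/1 mask of the nonzero entries of Pi(G),
   P H is the projection of Xi H onto ker (B Xi); it lies in the range of Xi, hence in V, and
   H - Xi H is orthogonal to V. An orthogonal projector is unique, self-adjoint and positive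
   semidefinite. Both formulas rest on F F^T (F F^T)^+ F = F, which needs the Moore-Penrose
   inverse to exist; it is built from an orthogonal projector onto the column space,
   constructed one column at a time. Matching the active set with the zero pattern of Pi(G)
   needs the Birkhoff projection to coincide with the Euclidean projection onto the vectorised
   polytope; both are well defined since the polytope is nonempty, compact and convex. *)

section \<open>Moore--Penrose pseudo-inverse\<close>

lemma scalar_prod_self_eq_0_iff: "(v :: real vec) \<in> carrier_vec n \<Longrightarrow> v \<bullet> v = 0 \<longleftrightarrow> v = 0\<^sub>v n"
  using conjugate_square_eq_0_vec[of v n] by simp

lemma scalar_prod_self_nonneg: "(v :: real vec) \<bullet> v \<ge> 0"
  using conjugate_square_ge_0_vec[of v] by simp

lemma eq_of_scalar_prod_minus_self_eq_0:
  assumes x: "(x :: real vec) \<in> carrier_vec N" and y: "y \<in> carrier_vec N" and "(x - y) \<bullet> (x - y) = 0"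
  shows "x = y"
proof -
  have xy: "x - y = 0\<^sub>v N" using assms scalar_prod_self_eq_0_iff[of "x - y" N] by simp
  show ?thesis
  proof (rule eq_vecI)
    fix i assume i: "i < dim_vec y"
    then have "(x - y) $ i = 0" using xy y by simp
    then show "x $ i = y $ i" using i x y by simp
  qed (use x y in simp)
qed

definition moore_penrose :: "real mat \<Rightarrow> real mat \<Rightarrow> bool" where
  "moore_penrose A X \<longleftrightarrow> X \<in> carrier_mat (dim_col A) (dim_row A) \<and>
      A * X * A = A \<and> X * A * X = X \<and> (A * X)\<^sup>T = A * X \<and> (X * A)\<^sup>T = X * A"

lemma moore_penrose_transpose:
  assumes A: "A \<in> carrier_mat m n" and X: "moore_penrose A X"
  shows "moore_penrose A\<^sup>T X\<^sup>T"
proof -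
  have Xc: "X \<in> carrier_mat n m" using A X by (simp add: moore_penrose_def)
  have "A\<^sup>T * X\<^sup>T = (X * A)\<^sup>T" "X\<^sup>T * A\<^sup>T = (A * X)\<^sup>T"
    using transpose_mult[OF Xc A] transpose_mult[OF A Xc] by simp_all
  moreover have "A\<^sup>T * X\<^sup>T * A\<^sup>T = (A * X * A)\<^sup>T" "X\<^sup>T * A\<^sup>T * X\<^sup>T = (X * A * X)\<^sup>T"
    using A Xc by (simp_all add: transpose_mult[OF A mult_carrier_mat[OF Xc A]] transpose_mult[OF Xc A]
        transpose_mult[OF Xc mult_carrier_mat[OF A Xc]] transpose_mult[OF A Xc])
  ultimately show ?thesis using A X Xc by (simp add: moore_penrose_def)
qed

lemma moore_penrose_mult_right_unique:
  assumes A: "A \<in> carrier_mat m n" and X: "moore_penrose A X" and Y: "moore_penrose A Y"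
  shows "A * X = A * Y"
proof -
  have Xc: "X \<in> carrier_mat n m" and Yc: "Y \<in> carrier_mat n m"
    and X': "A * X * A = A" "(A * X)\<^sup>T = A * X" and Y': "A * Y * A = A" "(A * Y)\<^sup>T = A * Y"
    using A X Y by (simp_all add: moore_penrose_def)
  have AX: "A * X \<in> carrier_mat m m" and AY: "A * Y \<in> carrier_mat m m" using A Xc Yc by auto
  have "A * X = (A * Y * A) * X" unfolding Y'(1) ..
  also have "\<dots> = (A * Y) * (A * X)" by (rule assoc_mult_mat[OF AY A Xc])
  also have "\<dots> = ((A * X) * (A * Y))\<^sup>T"
    unfolding transpose_mult[OF AX AY] X'(2) Y'(2) ..
  also have "(A * X) * (A * Y) = A * Y"
    unfolding assoc_mult_mat[OF AX A Yc, symmetric] X'(1) ..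
  finally show ?thesis using Y'(2) by (simp only:)
qed

lemma moore_penrose_unique:
  assumes A: "A \<in> carrier_mat m n" and X: "moore_penrose A X" and Y: "moore_penrose A Y"
  shows "X = Y"
proof -
  have Xc: "X \<in> carrier_mat n m" and Yc: "Y \<in> carrier_mat n m"
    and X': "X * A * X = X" and Y': "Y * A * Y = Y"
    using A X Y by (simp_all add: moore_penrose_def)
  have "A\<^sup>T * X\<^sup>T = A\<^sup>T * Y\<^sup>T"
    by (rule moore_penrose_mult_right_unique[OF _ moore_penrose_transpose[OF A X]
        moore_penrose_transpose[OF A Y]]) (use A in simp)
  then have XA: "X * A = Y * A"
    using transpose_mult[OF Xc A] transpose_mult[OF Yc A] by (metis transpose_transpose)
  have "X = X * (A * X)" unfolding assoc_mult_mat[OF Xc A Xc, symmetric] X' ..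
  also have "\<dots> = (X * A) * Y"
    unfolding moore_penrose_mult_right_unique[OF A X Y] by (rule assoc_mult_mat[OF Xc A Yc, symmetric])
  also have "\<dots> = Y" unfolding XA Y' ..
  finally show ?thesis .
qed

lemma pinv_eqI:
  assumes A: "A \<in> carrier_mat m n" and X: "moore_penrose A X"
  shows "pinv A = X"
proof -
  have "pinv A = (THE X. moore_penrose A X)" unfolding pinv_def moore_penrose_def ..
  also have "\<dots> = X" by (rule the_equality[of "moore_penrose A", OF X]) (rule moore_penrose_unique[OF A _ X])
  finally show ?thesis .
qed

definition outer_prod :: "'a :: comm_ring_1 vec \<Rightarrow> 'a vec \<Rightarrow> 'a mat" where
  "outer_prod a b = mat (dim_vec a) (dim_vec b) (\<lambda>(i, j). a $ i * b $ j)"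

lemma outer_prod_carrier [simp]: "outer_prod a b \<in> carrier_mat (dim_vec a) (dim_vec b)"
  and outer_prod_dim [simp]: "dim_row (outer_prod a b) = dim_vec a" "dim_col (outer_prod a b) = dim_vec b"
  and outer_prod_index [simp]:
    "i < dim_vec a \<Longrightarrow> j < dim_vec b \<Longrightarrow> outer_prod a b $$ (i, j) = a $ i * b $ j"
  unfolding outer_prod_def by auto

lemma outer_prod_zero_right [simp]: "outer_prod a (0\<^sub>v k) = 0\<^sub>m (dim_vec a) k"
  by (intro eq_matI) auto

lemma mult_outer_prod:
  "C \<in> carrier_mat m (dim_vec a) \<Longrightarrow> C * outer_prod a b = outer_prod (C *\<^sub>v a) b"
  by (intro eq_matI) (auto simp: scalar_prod_def sum_distrib_left ac_simps)

lemma outer_prod_mult: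
  "C \<in> carrier_mat (dim_vec b) p \<Longrightarrow> outer_prod a b * C = outer_prod a (C\<^sup>T *\<^sub>v b)"
  by (intro eq_matI) (auto simp: scalar_prod_def sum_distrib_left ac_simps)

lemma outer_prod_mult_vec:
  "x \<in> carrier_vec (dim_vec b) \<Longrightarrow> outer_prod a b *\<^sub>v x = (b \<bullet> x) \<cdot>\<^sub>v a"
  by (intro eq_vecI) (auto simp: scalar_prod_def sum_distrib_left ac_simps)

definition append_col :: "'a :: zero mat \<Rightarrow> 'a vec \<Rightarrow> 'a mat" where
  "append_col A a = mat (dim_row A) (Suc (dim_col A)) (\<lambda>(i, j). if j < dim_col A then A $$ (i, j) else a $ i)"

definition append_row :: "'a :: zero mat \<Rightarrow> 'a vec \<Rightarrow> 'a mat" where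
  "append_row R w = mat (Suc (dim_row R)) (dim_col R) (\<lambda>(i, j). if i < dim_row R then R $$ (i, j) else w $ j)"

lemma append_row_carrier:
  "R \<in> carrier_mat k p \<Longrightarrow> append_row R w \<in> carrier_mat (Suc k) p"
  unfolding append_row_def by auto

lemma append_col_last_col:
  "A \<in> carrier_mat m (Suc k) \<Longrightarrow> A = append_col (mat m k (\<lambda>ij. A $$ ij)) (col A k)"
  unfolding append_col_def by (intro eq_matI) (auto simp: less_Suc_eq)

lemma append_col_mult_append_row:
  assumes "A \<in> carrier_mat m k" "a \<in> carrier_vec m" "R \<in> carrier_mat k p" "w \<in> carrier_vec p"
  shows "append_col A a * append_row R w = A * R + outer_prod a w"
  using assms unfolding append_col_def append_row_def
  by (intro eq_matI) (auto simp: scalar_prod_def lessThan_Suc_atMost[symmetric] atLeast0LessThan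
      intro!: sum.cong)

lemma mult_append_col:
  "Q \<in> carrier_mat p m \<Longrightarrow> A \<in> carrier_mat m k \<Longrightarrow> a \<in> carrier_vec m \<Longrightarrow> Q * append_col A a = append_col (Q * A) (Q *\<^sub>v a)"
  unfolding append_col_def by (intro eq_matI) (auto simp: scalar_prod_def)

lemma projector_add_outer_prod:
  fixes Q A :: "real mat"
  assumes Q: "Q \<in> carrier_mat m m" "Q\<^sup>T = Q" "Q * Q = Q"
    and A: "A \<in> carrier_mat m k" "Q * A = A" and a: "a \<in> carrier_vec m"
  defines "a' \<equiv> a - Q *\<^sub>v a"
  defines "w \<equiv> (1 / (a' \<bullet> a')) \<cdot>\<^sub>v a'"
  shows "(Q + outer_prod a' w)\<^sup>T = Q + outer_prod a' w"
    and "(Q + outer_prod a' w) * A = A"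
    and "(Q + outer_prod a' w) *\<^sub>v a = a"
proof -
  have a': "a' \<in> carrier_vec m" and w: "w \<in> carrier_vec m" using Q a by (simp_all add: a'_def w_def)
  have O: "outer_prod a' w \<in> carrier_mat m m" using a' w by (metis carrier_vecD outer_prod_carrier)
  have Qa': "Q *\<^sub>v a' = 0\<^sub>v m"
    using Q a by (simp add: a'_def mult_minus_distrib_mat_vec assoc_mult_mat_vec[symmetric])
  have Aa': "A\<^sup>T *\<^sub>v a' = 0\<^sub>v k"
  proof -
    have "A\<^sup>T * Q = A\<^sup>T" using transpose_mult[OF Q(1) A(1)] Q(2) A(2) by simp
    then have "A\<^sup>T *\<^sub>v (Q *\<^sub>v a) = A\<^sup>T *\<^sub>v a" using A(1) Q(1) a
      by (metis assoc_mult_mat_vec transpose_carrier_mat)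
    then show ?thesis using A(1) Q(1) a by (simp add: a'_def mult_minus_distrib_mat_vec)
  qed
  have "(outer_prod a' w)\<^sup>T = outer_prod a' w"
    using a' w by (intro eq_matI) (auto simp: w_def)
  then show "(Q + outer_prod a' w)\<^sup>T = Q + outer_prod a' w"
    using transpose_add[OF Q(1) O] Q(2) by simp
  have "outer_prod a' w * A = outer_prod a' (A\<^sup>T *\<^sub>v w)"
    using A(1) w by (simp add: outer_prod_mult)
  also have "A\<^sup>T *\<^sub>v w = 0\<^sub>v k"
    using Aa' mult_mat_vec[of "A\<^sup>T" k m a'] A(1) a' by (auto simp: w_def intro!: eq_vecI)
  finally show "(Q + outer_prod a' w) * A = A"
    using A Q(1) O a' by (simp add: add_mult_distrib_mat)
  have "a' \<bullet> (Q *\<^sub>v a) = (Q *\<^sub>v a') \<bullet> a"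
    using transpose_vec_mult_scalar[OF Q(1) a a'] Q(2) by simp
  also have "\<dots> = 0" using Qa' a by simp
  finally have "a' \<bullet> (Q *\<^sub>v a) = 0" .
  moreover have "a' \<bullet> a' = a' \<bullet> a - a' \<bullet> (Q *\<^sub>v a)"
    unfolding a'_def by (rule scalar_prod_minus_distrib) (use Q(1) a in auto)
  ultimately have "w \<bullet> a = 1" if "a' \<noteq> 0\<^sub>v m"
    using that a a' scalar_prod_self_eq_0_iff[OF a'] by (simp add: w_def)
  \<comment> \<open>if \<open>a\<close> already lies in the range of \<open>Q\<close>, then \<open>a' = 0\<close> and \<open>w = 0\<close> (as \<open>1 / 0 = 0\<close>)\<close>
  then have "(w \<bullet> a) \<cdot>\<^sub>v a' = a'" by (cases "a' = 0\<^sub>v m") auto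
  moreover have "Q *\<^sub>v a + a' = a" using Q(1) a by (auto simp: a'_def intro!: eq_vecI)
  ultimately show "(Q + outer_prod a' w) *\<^sub>v a = a"
    using Q(1) O a a' w by (simp add: add_mult_distrib_mat_vec outer_prod_mult_vec)
qed

lemma range_projector_exists:
  fixes A :: "real mat"
  assumes "A \<in> carrier_mat m k"
  shows "\<exists>R \<in> carrier_mat k m. (A * R)\<^sup>T = A * R \<and> A * R * A = A"
  using assms
proof (induction k arbitrary: A)
  case 0
  then have "A * 0\<^sub>m 0 m = 0\<^sub>m m m" and "0\<^sub>m m m * A = A" by auto
  then show ?case by (intro bexI[of _ "0\<^sub>m 0 m"]) auto
next
  case (Suc k)
  define A0 where "A0 = mat m k (\<lambda>ij. A $$ ij)"
  define a where "a = col A k"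
  have A0: "A0 \<in> carrier_mat m k" and a: "a \<in> carrier_vec m" and A: "A = append_col A0 a"
    using Suc.prems append_col_last_col[OF Suc.prems] by (auto simp: A0_def a_def)
  obtain R0 where R0: "R0 \<in> carrier_mat k m" and sym0: "(A0 * R0)\<^sup>T = A0 * R0"
    and proj0: "A0 * R0 * A0 = A0" using Suc.IH[OF A0] by blast
  define Q where "Q = A0 * R0"
  have Q: "Q \<in> carrier_mat m m" using A0 R0 by (simp add: Q_def)
  have QA0: "Q * A0 = A0" using proj0 by (simp add: Q_def)
  have "Q * Q = (A0 * R0 * A0) * R0"
    unfolding Q_def by (rule assoc_mult_mat[OF mult_carrier_mat[OF A0 R0] A0 R0, symmetric])
  also have "\<dots> = Q" unfolding proj0 Q_def ..
  finally have QQ: "Q * Q = Q" .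
  define a' where "a' = a - Q *\<^sub>v a"
  define w where "w = (1 / (a' \<bullet> a')) \<cdot>\<^sub>v a'"
  have a': "a' \<in> carrier_vec m" and w: "w \<in> carrier_vec m" using Q a by (simp_all add: a'_def w_def)
  note ext = projector_add_outer_prod[OF Q sym0[folded Q_def] QQ A0 QA0 a, folded a'_def, folded w_def]
  define R where "R = append_row (R0 - outer_prod (R0 *\<^sub>v a) w) w"
  have O: "outer_prod (R0 *\<^sub>v a) w \<in> carrier_mat k m"
    using outer_prod_carrier[of "R0 *\<^sub>v a" w] R0 w by simp
  have R1: "R0 - outer_prod (R0 *\<^sub>v a) w \<in> carrier_mat k m" using minus_carrier_mat[OF O, of R0] R0 by simp
  have "A * R = A0 * (R0 - outer_prod (R0 *\<^sub>v a) w) + outer_prod a w"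
    unfolding A R_def by (rule append_col_mult_append_row[OF A0 a R1 w])
  also have "A0 * (R0 - outer_prod (R0 *\<^sub>v a) w) = Q - outer_prod (Q *\<^sub>v a) w"
    using A0 R0 a w by (simp add: Q_def mult_minus_distrib_mat[OF A0 R0 O] mult_outer_prod)
  also have "Q - outer_prod (Q *\<^sub>v a) w + outer_prod a w = Q + outer_prod a' w"
    using Q a w by (intro eq_matI) (auto simp: a'_def algebra_simps)
  finally have AR: "A * R = Q + outer_prod a' w" .
  have "Q + outer_prod a' w \<in> carrier_mat m m"
    using Q outer_prod_carrier[of a' w] a' w by simp
  then have "(Q + outer_prod a' w) * A = append_col A0 a"
    unfolding A by (simp only: mult_append_col[OF _ A0 a] ext(2,3))
  then have "(Q + outer_prod a' w) * A = A" using A by simp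
  moreover have "R \<in> carrier_mat (Suc k) m" unfolding R_def by (rule append_row_carrier[OF R1])
  ultimately show ?case using ext(1) unfolding AR[symmetric] by blast
qed

lemma moore_penrose_exists:
  fixes A :: "real mat"
  assumes A: "A \<in> carrier_mat m n"
  shows "\<exists>X. moore_penrose A X"
proof -
  obtain R where R: "R \<in> carrier_mat n m" and symR: "(A * R)\<^sup>T = A * R" and ARA: "A * R * A = A"
    using range_projector_exists[OF A] by blast
  have AT: "A\<^sup>T \<in> carrier_mat n m" using A by simp
  obtain S where S: "S \<in> carrier_mat m n" and symS: "(A\<^sup>T * S)\<^sup>T = A\<^sup>T * S"
    and ATSAT: "A\<^sup>T * S * A\<^sup>T = A\<^sup>T"
    using range_projector_exists[OF AT] by blast
  define P where "P = A\<^sup>T * S"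
  have P: "P \<in> carrier_mat n n" using AT S by (simp add: P_def)
  have P_alt: "P = S\<^sup>T * A"
    using symS transpose_mult[OF AT S] by (simp add: P_def)
  have AP: "A * P = A"
  proof -
    have "A = (A\<^sup>T * S * A\<^sup>T)\<^sup>T" unfolding ATSAT by simp
    also have "\<dots> = A * P\<^sup>T" using transpose_mult[OF mult_carrier_mat[OF AT S] AT] by (simp add: P_def)
    finally show ?thesis using symS by (simp add: P_def)
  qed
  have ST: "S\<^sup>T \<in> carrier_mat n m" using S by simp
  have PP: "P * P = P"
    using assoc_mult_mat[OF ST A P] AP by (simp add: P_alt[symmetric])
  define X where "X = P * R"
  have X: "X \<in> carrier_mat n m" using P R by (simp add: X_def)
  have AX: "A * X = A * R"
    unfolding X_def assoc_mult_mat[OF A P R, symmetric] AP ..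
  have XA: "X * A = P"
  proof -
    have "X * A = S\<^sup>T * A * (R * A)"
      unfolding X_def P_alt by (rule assoc_mult_mat[OF mult_carrier_mat[OF ST A] R A])
    also have "\<dots> = S\<^sup>T * (A * R * A)"
      using assoc_mult_mat[OF ST A mult_carrier_mat[OF R A]] assoc_mult_mat[OF A R A] by simp
    finally have "X * A = S\<^sup>T * (A * R * A)" .
    then show ?thesis unfolding ARA P_alt .
  qed
  have "moore_penrose A X"
    unfolding moore_penrose_def
  proof (intro conjI)
    show "X \<in> carrier_mat (dim_col A) (dim_row A)" using X A by simp
    show "A * X * A = A" unfolding AX ARA ..
    have "X * A * X = P * P * R"
      unfolding XA unfolding X_def by (rule assoc_mult_mat[OF P P R, symmetric])
    then show "X * A * X = X" unfolding PP X_def .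
    show "(A * X)\<^sup>T = A * X" unfolding AX symR ..
    show "(X * A)\<^sup>T = X * A" unfolding XA P_def symS ..
  qed
  then show ?thesis ..
qed

lemma moore_penrose_pinv:
  fixes A :: "real mat"
  assumes "A \<in> carrier_mat m n"
  shows "moore_penrose A (pinv A)"
proof -
  obtain X where "moore_penrose A X" using moore_penrose_exists[OF assms] ..
  moreover from this have "pinv A = X" by (rule pinv_eqI[OF assms])
  ultimately show ?thesis by (simp only:)
qed

lemma pinv_carrier:
  fixes A :: "real mat"
  assumes "A \<in> carrier_mat m n"
  shows "pinv A \<in> carrier_mat n m"
proof -
  have "pinv A \<in> carrier_mat (dim_col A) (dim_row A)"
    using moore_penrose_pinv[OF assms] unfolding moore_penrose_def by blast
  then show ?thesis using assms by simp
qed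

lemma mult_transpose_self_eq_0D:
  fixes G :: "real mat"
  assumes G: "G \<in> carrier_mat m n" and "G * G\<^sup>T = 0\<^sub>m m m"
  shows "G = 0\<^sub>m m n"
proof (rule eq_matI)
  fix i j assume i: "i < dim_row (0\<^sub>m m n :: real mat)" and j: "j < dim_col (0\<^sub>m m n :: real mat)"
  have "row G i \<bullet> row G i = (G * G\<^sup>T) $$ (i, i)" using G i by simp
  then have "row G i = 0\<^sub>v n" using assms(2) G i scalar_prod_self_eq_0_iff[of "row G i" n] by simp
  moreover have "G $$ (i, j) = row G i $ j" using G i j by simp
  ultimately show "G $$ (i, j) = 0\<^sub>m m n $$ (i, j)" using i j by simp
qed (use G in auto)

lemma gram_pinv_gram_mult:
  fixes F :: "real mat"
  assumes F: "F \<in> carrier_mat r N"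
  shows "F * F\<^sup>T * pinv (F * F\<^sup>T) * F = F"
proof -
  define M where "M = F * F\<^sup>T"
  have M: "M \<in> carrier_mat r r" using F by (simp add: M_def)
  define Q where "Q = M * pinv M"
  have Q: "Q \<in> carrier_mat r r" using M pinv_carrier[OF M] by (simp add: Q_def)
  have QM: "Q * M = M" using moore_penrose_pinv[OF M] by (simp add: moore_penrose_def Q_def)
  have I: "Q - 1\<^sub>m r \<in> carrier_mat r r" by (rule minus_carrier_mat[OF one_carrier_mat])
  define G where "G = (Q - 1\<^sub>m r) * F"
  have G: "G \<in> carrier_mat r N" using mult_carrier_mat[OF I F] by (simp add: G_def)
  have QIM: "(Q - 1\<^sub>m r) * M = 0\<^sub>m r r"
    using Q M QM by (simp add: minus_mult_distrib_mat[OF Q one_carrier_mat M])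
  have FT: "F\<^sup>T \<in> carrier_mat N r" and IT: "(Q - 1\<^sub>m r)\<^sup>T \<in> carrier_mat r r"
    using F I by simp_all
  have "G * G\<^sup>T = (Q - 1\<^sub>m r) * F * (F\<^sup>T * (Q - 1\<^sub>m r)\<^sup>T)"
    unfolding G_def transpose_mult[OF I F] ..
  also have "\<dots> = (Q - 1\<^sub>m r) * (M * (Q - 1\<^sub>m r)\<^sup>T)"
    unfolding M_def assoc_mult_mat[OF F FT IT] by (rule assoc_mult_mat[OF I F mult_carrier_mat[OF FT IT]])
  also have "\<dots> = ((Q - 1\<^sub>m r) * M) * (Q - 1\<^sub>m r)\<^sup>T" by (rule assoc_mult_mat[OF I M IT, symmetric])
  also have "\<dots> = 0\<^sub>m r r" unfolding QIM using I by simp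
  finally have "G * G\<^sup>T = 0\<^sub>m r r" .
  then have "(Q - 1\<^sub>m r) * F = 0\<^sub>m r N" using mult_transpose_self_eq_0D[OF G] by (simp add: G_def)
  then have QF0: "Q * F - F = 0\<^sub>m r N" using Q F by (simp add: minus_mult_distrib_mat[OF Q one_carrier_mat F])
  have "Q * F = F"
  proof (rule eq_matI)
    fix i j assume ij: "i < dim_row F" "j < dim_col F"
    then have "(Q * F - F) $$ (i, j) = 0" using QF0 F by simp
    then show "(Q * F) $$ (i, j) = F $$ (i, j)" using ij Q by simp
  qed (use Q F in auto)
  then show ?thesis unfolding Q_def M_def .
qed

section \<open>Orthogonal projectors onto kernels\<close>

definition is_orth_proj :: "real vec set \<Rightarrow> real vec \<Rightarrow> real vec \<Rightarrow> bool" where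
  "is_orth_proj V x p \<longleftrightarrow> p \<in> V \<and> (\<forall>v\<in>V. (x - p) \<bullet> v = 0)"

lemma is_orth_proj_unique:
  assumes V: "V \<subseteq> carrier_vec N" "\<And>u v. u \<in> V \<Longrightarrow> v \<in> V \<Longrightarrow> u - v \<in> V"
    and x: "x \<in> carrier_vec N" and p: "is_orth_proj V x p" and q: "is_orth_proj V x q"
  shows "p = q"
proof -
  have pV: "p \<in> V" and qV: "q \<in> V" using p q by (simp_all add: is_orth_proj_def)
  then have pc: "p \<in> carrier_vec N" and qc: "q \<in> carrier_vec N" using V(1) by auto
  have "(x - q) \<bullet> (p - q) = 0" and "(x - p) \<bullet> (p - q) = 0"
    using p q V(2)[OF pV qV] by (simp_all add: is_orth_proj_def)
  moreover have "(x - q) - (x - p) = p - q" using x pc qc by (intro eq_vecI) auto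
  then have "(p - q) \<bullet> (p - q) = (x - q) \<bullet> (p - q) - (x - p) \<bullet> (p - q)"
    using minus_scalar_prod_distrib[of "x - q" N "x - p" "p - q"] x pc qc by simp
  ultimately have "(p - q) \<bullet> (p - q) = 0" by simp
  then show ?thesis by (rule eq_of_scalar_prod_minus_self_eq_0[OF pc qc])
qed

lemma is_orth_proj_symmetric:
  assumes V: "V \<subseteq> carrier_vec N" and x: "x \<in> carrier_vec N" and y: "y \<in> carrier_vec N"
    and p: "is_orth_proj V x p" and q: "is_orth_proj V y q"
  shows "p \<bullet> y = x \<bullet> q"
proof -
  have pc: "p \<in> carrier_vec N" and qc: "q \<in> carrier_vec N"
    using p q V by (auto simp: is_orth_proj_def)
  have "y \<bullet> p - q \<bullet> p = 0" "x \<bullet> q - p \<bullet> q = 0"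
    using p q minus_scalar_prod_distrib[OF y qc pc] minus_scalar_prod_distrib[OF x pc qc]
    by (simp_all add: is_orth_proj_def)
  then show ?thesis using comm_scalar_prod[OF pc y] comm_scalar_prod[OF pc qc] by simp
qed

lemma is_orth_proj_nonneg:
  assumes V: "V \<subseteq> carrier_vec N" and x: "x \<in> carrier_vec N" and p: "is_orth_proj V x p"
  shows "p \<bullet> x \<ge> 0"
proof -
  have pc: "p \<in> carrier_vec N" using p V by (auto simp: is_orth_proj_def)
  have "x \<bullet> p - p \<bullet> p = 0"
    using p minus_scalar_prod_distrib[OF x pc pc] by (simp add: is_orth_proj_def)
  then show ?thesis using comm_scalar_prod[OF pc x] scalar_prod_self_nonneg[of p] by simp
qed

lemma is_orth_proj_mat_kernel:
  fixes F :: "real mat"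
  assumes F: "F \<in> carrier_mat r N" and x: "x \<in> carrier_vec N"
  shows "is_orth_proj (mat_kernel F) x (x - F\<^sup>T *\<^sub>v (pinv (F * F\<^sup>T) *\<^sub>v (F *\<^sub>v x)))"
proof -
  define w where "w = pinv (F * F\<^sup>T) *\<^sub>v (F *\<^sub>v x)"
  have FT: "F\<^sup>T \<in> carrier_mat N r" and FF: "F * F\<^sup>T \<in> carrier_mat r r" using F by simp_all
  have w: "w \<in> carrier_vec r" using pinv_carrier[OF FF] F x by (simp add: w_def)
  have P: "pinv (F * F\<^sup>T) \<in> carrier_mat r r" by (rule pinv_carrier[OF FF])
  have "F *\<^sub>v (F\<^sup>T *\<^sub>v w) = (F * F\<^sup>T) *\<^sub>v (pinv (F * F\<^sup>T) *\<^sub>v (F *\<^sub>v x))"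
    unfolding w_def by (rule assoc_mult_mat_vec[OF F FT, symmetric]) (use P F x in simp)
  also have "\<dots> = (F * F\<^sup>T * pinv (F * F\<^sup>T)) *\<^sub>v (F *\<^sub>v x)"
    by (rule assoc_mult_mat_vec[OF FF P, symmetric]) (use F x in simp)
  also have "\<dots> = (F * F\<^sup>T * pinv (F * F\<^sup>T) * F) *\<^sub>v x"
    by (rule assoc_mult_mat_vec[symmetric, OF mult_carrier_mat[OF FF P] F x])
  also have "\<dots> = F *\<^sub>v x" unfolding gram_pinv_gram_mult[OF F] ..
  finally have "F *\<^sub>v (x - F\<^sup>T *\<^sub>v w) = 0\<^sub>v r"
    using F FT x w by (simp add: mult_minus_distrib_mat_vec)
  moreover have "(x - (x - F\<^sup>T *\<^sub>v w)) \<bullet> v = 0" if "v \<in> mat_kernel F" for v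
  proof -
    have v: "v \<in> carrier_vec N" and Fv: "F *\<^sub>v v = 0\<^sub>v r" using that F by (auto dest: mat_kernelD)
    have "x - (x - F\<^sup>T *\<^sub>v w) = F\<^sup>T *\<^sub>v w" using x FT w by auto
    then show ?thesis using transpose_vec_mult_scalar[OF F v w] Fv w by simp
  qed
  ultimately show ?thesis
    using mult_mat_vec_carrier[OF FT w] x unfolding is_orth_proj_def w_def[symmetric]
    by (auto intro: mat_kernelI[OF F])
qed

definition active_constraint_mat :: "real mat \<Rightarrow> real vec \<Rightarrow> real mat \<Rightarrow> real vec \<Rightarrow> real vec \<Rightarrow> real mat" where
  "active_constraint_mat A b B d x = mat_of_rows (dim_col A)
     (map (row A) (filter (\<lambda>i. i \<in> active_set A b B d x) [0..<dim_row A]) @ rows B)"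

lemma is_orth_proj_hs_jacobian:
  assumes y: "y \<in> carrier_vec (dim_col A)"
  shows "is_orth_proj (mat_kernel (active_constraint_mat A b B d x)) y (hs_jacobian A b B d x *\<^sub>v y)"
proof -
  define C where "C = active_constraint_mat A b B d x"
  obtain k where C: "C \<in> carrier_mat k (dim_col A)" unfolding C_def active_constraint_mat_def
    using mat_of_rows_carrier(1) by blast
  have CT: "C\<^sup>T \<in> carrier_mat (dim_col A) k" and CC: "C * C\<^sup>T \<in> carrier_mat k k" using C by simp_all
  have P: "pinv (C * C\<^sup>T) \<in> carrier_mat k k" by (rule pinv_carrier[OF CC])
  have "hs_jacobian A b B d x = 1\<^sub>m (dim_col A) - C\<^sup>T * pinv (C * C\<^sup>T) * C"
    unfolding hs_jacobian_def C_def active_constraint_mat_def Let_def ..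
  also have "\<dots> *\<^sub>v y = y - (C\<^sup>T * pinv (C * C\<^sup>T) * C) *\<^sub>v y"
    using minus_mult_distrib_mat_vec[OF one_carrier_mat mult_carrier_mat[OF mult_carrier_mat[OF CT P] C] y]
      y by simp
  also have "(C\<^sup>T * pinv (C * C\<^sup>T) * C) *\<^sub>v y = C\<^sup>T *\<^sub>v (pinv (C * C\<^sup>T) *\<^sub>v (C *\<^sub>v y))"
    using assoc_mult_mat_vec[OF mult_carrier_mat[OF CT P] C y] assoc_mult_mat_vec[OF CT P] C y by simp
  finally show ?thesis using is_orth_proj_mat_kernel[OF C y] by (simp add: C_def)
qed

lemma mat_kernel_unit_rows_append:
  fixes B :: "real mat"
  assumes B: "B \<in> carrier_mat r N" and ks: "set ks \<subseteq> {..<N}"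
  shows "mat_kernel (mat_of_rows N (map (unit_vec N) ks @ rows B))
    = {v \<in> carrier_vec N. (\<forall>k\<in>set ks. v $ k = 0) \<and> B *\<^sub>v v = 0\<^sub>v r}"
    (is "mat_kernel ?C = _")
proof -
  have C: "?C \<in> carrier_mat (length ks + r) N"
    using B mat_of_rows_carrier(1)[of N "map (unit_vec N) ks @ rows B"] by simp
  have C_mult: "(?C *\<^sub>v v) $ i = (if i < length ks then v $ (ks ! i) else (B *\<^sub>v v) $ (i - length ks))"
    if v: "v \<in> carrier_vec N" and i: "i < length ks + r" for v i
  proof -
    have "row ?C i = (map (unit_vec N) ks @ rows B) ! i"
      using i B ks nth_mem[of i ks] by (intro mat_of_rows_row) (auto simp: nth_append)
    moreover have "(?C *\<^sub>v v) $ i = row ?C i \<bullet> v" using B i by (intro index_mult_mat_vec) simp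
    ultimately have "(?C *\<^sub>v v) $ i = (map (unit_vec N) ks @ rows B) ! i \<bullet> v" by simp
    moreover have "i < length ks \<Longrightarrow> ks ! i < N" using ks nth_mem by fastforce
    ultimately show ?thesis using i v B by (auto simp: nth_append)
  qed
  have "?C *\<^sub>v v = 0\<^sub>v (length ks + r) \<longleftrightarrow> (\<forall>k\<in>set ks. v $ k = 0) \<and> B *\<^sub>v v = 0\<^sub>v r"
    if v: "v \<in> carrier_vec N" for v
  proof -
    have "?C *\<^sub>v v = 0\<^sub>v (length ks + r) \<longleftrightarrow> (\<forall>i < length ks + r. (?C *\<^sub>v v) $ i = 0)"
      using C by (auto intro!: eq_vecI)
    also have "\<dots> \<longleftrightarrow> (\<forall>i < length ks. v $ (ks ! i) = 0) \<and> (\<forall>j < r. (B *\<^sub>v v) $ j = 0)"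
      using C_mult[OF v] by (auto, metis add_diff_cancel_left' nat_add_left_cancel_less not_add_less1)
    also have "(\<forall>i < length ks. v $ (ks ! i) = 0) \<longleftrightarrow> (\<forall>k\<in>set ks. v $ k = 0)"
      by (metis in_set_conv_nth)
    also have "(\<forall>j < r. (B *\<^sub>v v) $ j = 0) \<longleftrightarrow> B *\<^sub>v v = 0\<^sub>v r"
      using B by (metis carrier_matD(1) dim_mult_mat_vec eq_vecI index_zero_vec)
    finally show ?thesis .
  qed
  then show ?thesis using C by (auto simp: mat_kernel_def)
qed

definition mask_mat :: "nat \<Rightarrow> nat set \<Rightarrow> real mat" where
  "mask_mat N S = mat N N (\<lambda>(i, j). if i = j \<and> i \<in> S then 1 else 0)"

lemma mask_mat_carrier [simp]: "mask_mat N S \<in> carrier_mat N N"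
  and dim_mask_mat [simp]: "dim_row (mask_mat N S) = N" "dim_col (mask_mat N S) = N"
  unfolding mask_mat_def by simp_all

lemma transpose_mask_mat [simp]: "(mask_mat N S)\<^sup>T = mask_mat N S"
  unfolding mask_mat_def by (intro eq_matI) auto

lemma mask_mat_mult_vec:
  assumes "v \<in> carrier_vec N"
  shows "mask_mat N S *\<^sub>v v = vec N (\<lambda>k. if k \<in> S then v $ k else 0)"
proof (rule eq_vecI)
  fix i assume "i < dim_vec (vec N (\<lambda>k. if k \<in> S then v $ k else 0))"
  then have i: "i < N" by simp
  have "(mask_mat N S *\<^sub>v v) $ i = (\<Sum>j<N. (if i = j \<and> i \<in> S then 1 else 0) * v $ j)"
    using assms i by (simp add: mask_mat_def scalar_prod_def atLeast0LessThan)
  also have "\<dots> = (\<Sum>j<N. if j = i then (if i \<in> S then v $ i else 0) else 0)"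
    by (intro sum.cong) auto
  finally show "(mask_mat N S *\<^sub>v v) $ i = vec N (\<lambda>k. if k \<in> S then v $ k else 0) $ i"
    using i by simp
qed (use assms in \<open>simp add: mask_mat_def\<close>)

lemma mask_mat_mult_vec_idem:
  "v \<in> carrier_vec N \<Longrightarrow> mask_mat N S *\<^sub>v (mask_mat N S *\<^sub>v v) = mask_mat N S *\<^sub>v v"
  by (simp add: mask_mat_mult_vec vec_eq_iff)

lemma mask_mat_mult_vec_eq_iff:
  "v \<in> carrier_vec N \<Longrightarrow> mask_mat N S *\<^sub>v v = v \<longleftrightarrow> (\<forall>k<N. k \<notin> S \<longrightarrow> v $ k = 0)"
  by (auto simp: mask_mat_mult_vec vec_eq_iff)

definition masked_kernel :: "real mat \<Rightarrow> nat set \<Rightarrow> real vec set" where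
  "masked_kernel B S = {v \<in> mat_kernel B. \<forall>k<dim_col B. k \<notin> S \<longrightarrow> v $ k = 0}"

lemma mem_masked_kernel_iff:
  "B \<in> carrier_mat r N \<Longrightarrow> v \<in> masked_kernel B S \<longleftrightarrow>
    v \<in> carrier_vec N \<and> (\<forall>k<N. k \<notin> S \<longrightarrow> v $ k = 0) \<and> B *\<^sub>v v = 0\<^sub>v r"
  unfolding masked_kernel_def mat_kernel_def by auto

lemma masked_kernel_minus:
  assumes "u \<in> masked_kernel B S" "v \<in> masked_kernel B S"
  shows "u - v \<in> masked_kernel B S"
  using assms mem_masked_kernel_iff[of B "dim_row B" "dim_col B"]
  by (auto simp: mult_minus_distrib_mat_vec[of B "dim_row B" "dim_col B"])

lemma is_orth_proj_masked_kernelI: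
  fixes B :: "real mat"
  assumes B: "B \<in> carrier_mat r N" and x: "x \<in> carrier_vec N"
    and p: "is_orth_proj (mat_kernel (B * mask_mat N S)) (mask_mat N S *\<^sub>v x) p"
    and mask_p: "mask_mat N S *\<^sub>v p = p"
  shows "is_orth_proj (masked_kernel B S) x p"
proof -
  define D where "D = mask_mat N S"
  have D: "D \<in> carrier_mat N N" by (simp add: D_def)
  have F: "B * D \<in> carrier_mat r N" using B D by simp
  have V: "v \<in> masked_kernel B S \<longleftrightarrow> v \<in> carrier_vec N \<and> (\<forall>k<N. k \<notin> S \<longrightarrow> v $ k = 0) \<and> B *\<^sub>v v = 0\<^sub>v r"
    for v by (rule mem_masked_kernel_iff[OF B])
  have pc: "p \<in> carrier_vec N" and Fp: "(B * D) *\<^sub>v p = 0\<^sub>v r"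
    using p F by (auto simp: is_orth_proj_def D_def dest: mat_kernelD)
  have Dx: "D *\<^sub>v x \<in> carrier_vec N" using D x by simp
  have mask_V: "D *\<^sub>v v = v" if "v \<in> masked_kernel B S" for v
    using that V mask_mat_mult_vec_eq_iff[of v N S] by (simp add: D_def)
  have "p \<in> masked_kernel B S"
    using V pc Fp mask_p mask_mat_mult_vec_eq_iff[OF pc, of S] assoc_mult_mat_vec[OF B D pc]
    by (simp add: D_def)
  moreover have "(x - p) \<bullet> v = 0" if v: "v \<in> masked_kernel B S" for v
  proof -
    have vc: "v \<in> carrier_vec N" using v V by simp
    have "v \<in> mat_kernel (B * D)"
      using v V mask_V[OF v] assoc_mult_mat_vec[OF B D vc] F by (auto intro: mat_kernelI)
    then have "(D *\<^sub>v x - p) \<bullet> v = 0" using p by (simp add: is_orth_proj_def D_def)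
    moreover have "(x - D *\<^sub>v x) \<bullet> v = 0"
    proof -
      have "D *\<^sub>v (x - D *\<^sub>v x) = D *\<^sub>v x - D *\<^sub>v (D *\<^sub>v x)"
        by (rule mult_minus_distrib_mat_vec[OF D x Dx])
      also have "\<dots> = 0\<^sub>v N"
        unfolding D_def mask_mat_mult_vec_idem[OF x] using Dx[unfolded D_def] by (intro eq_vecI) auto
      finally show ?thesis
        using transpose_vec_mult_scalar[OF D vc, of "x - D *\<^sub>v x"] mask_V[OF v] x Dx vc
        by (simp add: D_def)
    qed
    moreover have "x - p = (x - D *\<^sub>v x) + (D *\<^sub>v x - p)" using x pc Dx D by (intro eq_vecI) auto
    ultimately show ?thesis
      using add_scalar_prod_distrib[of "x - D *\<^sub>v x" N "D *\<^sub>v x - p" v] x pc Dx vc by simp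
  qed
  ultimately show ?thesis unfolding is_orth_proj_def by blast
qed

lemma is_orth_proj_masked_kernel:
  fixes B :: "real mat" and S :: "nat set"
  assumes B: "B \<in> carrier_mat r N" and x: "x \<in> carrier_vec N"
  defines "D \<equiv> mask_mat N S"
  defines "F \<equiv> B * mask_mat N S"
  shows "is_orth_proj (masked_kernel B S) x (D *\<^sub>v x - D *\<^sub>v (B\<^sup>T *\<^sub>v (pinv (F * F\<^sup>T) *\<^sub>v (F *\<^sub>v x))))"
    (is "is_orth_proj _ x ?p")
proof (rule is_orth_proj_masked_kernelI[OF B x])
  have D: "D \<in> carrier_mat N N" by (simp add: D_def)
  have F: "F \<in> carrier_mat r N" using B by (simp add: F_def)
  have BT: "B\<^sup>T \<in> carrier_mat N r" using B by simp
  define w where "w = pinv (F * F\<^sup>T) *\<^sub>v (F *\<^sub>v x)"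
  have w: "w \<in> carrier_vec r" using pinv_carrier[of "F * F\<^sup>T" r r] F x by (simp add: w_def)
  have u: "B\<^sup>T *\<^sub>v w \<in> carrier_vec N" using BT w by simp
  have Dx: "D *\<^sub>v x \<in> carrier_vec N" using D x by simp
  have "F *\<^sub>v (D *\<^sub>v x) = F *\<^sub>v x"
    using assoc_mult_mat_vec[OF B D Dx] assoc_mult_mat_vec[OF B D x] mask_mat_mult_vec_idem[OF x]
    by (simp add: F_def D_def)
  moreover have "F\<^sup>T = D * B\<^sup>T" using transpose_mult[OF B D] by (simp add: F_def D_def)
  then have "F\<^sup>T *\<^sub>v w = D *\<^sub>v (B\<^sup>T *\<^sub>v w)" using assoc_mult_mat_vec[OF D BT w] by simp
  ultimately show "is_orth_proj (mat_kernel (B * mask_mat N S)) (mask_mat N S *\<^sub>v x) ?p"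
    using is_orth_proj_mat_kernel[OF F Dx] by (simp add: w_def F_def D_def)
  have "D *\<^sub>v ?p = D *\<^sub>v (D *\<^sub>v x) - D *\<^sub>v (D *\<^sub>v (B\<^sup>T *\<^sub>v w))"
    unfolding w_def[symmetric] by (rule mult_minus_distrib_mat_vec[OF D Dx]) (use D u in simp)
  also have "\<dots> = ?p"
    unfolding w_def[symmetric] D_def mask_mat_mult_vec_idem[OF x] mask_mat_mult_vec_idem[OF u] ..
  finally show "mask_mat N S *\<^sub>v ?p = ?p" by (simp add: D_def)
qed

section \<open>Row-major vectorisation of square matrices\<close>

lemma row_major_index_less: "(i :: nat) < n \<Longrightarrow> j < n \<Longrightarrow> i * n + j < n * n"
proof -
  assume "i < n" "j < n"
  then have "i * n + j < Suc i * n" by simp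
  also have "\<dots> \<le> n * n" using \<open>i < n\<close> by (intro mult_right_mono) auto
  finally show ?thesis .
qed

lemma row_major_index_eq_iff:
  "(j :: nat) < n \<Longrightarrow> j' < n \<Longrightarrow> i * n + j = i' * n + j' \<longleftrightarrow> i = i' \<and> j = j'"
  by (metis add.commute div_mult_self1 div_less mod_mult_self1 mod_less less_zeroE
      add_cancel_right_left not_less0)

lemma div_mod_less: "(k :: nat) < n * n \<Longrightarrow> k div n < n \<and> k mod n < n"
  by (metis less_mult_imp_div_less mod_less_divisor mult_eq_0_iff not_gr0 not_less0)

lemma sum_row_major:
  fixes f :: "nat \<Rightarrow> 'a :: comm_monoid_add"
  shows "(\<Sum>k<n * n. f k) = (\<Sum>i<n. \<Sum>j<n. f (i * n + j))"
proof -
  have "(\<Sum>k<n * n. f k) = (\<Sum>i<n. sum f {i * n..<i * n + n})"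
    using sum.nat_group[of f n n] by simp
  also have "\<dots> = (\<Sum>i<n. \<Sum>j<n. f (i * n + j))"
  proof (rule sum.cong[OF refl])
    fix i
    have "sum f {i * n..<i * n + n} = sum f {0 + i * n..<n + i * n}" by (simp add: add.commute)
    also have "\<dots> = (\<Sum>j = 0..<n. f (j + i * n))" by (rule sum.shift_bounds_nat_ivl)
    finally show "sum f {i * n..<i * n + n} = (\<Sum>j<n. f (i * n + j))"
      by (simp add: atLeast0LessThan add.commute)
  qed
  finally show ?thesis .
qed

lemma vec_of_mat_carrier [simp]: "vec_of_mat n X \<in> carrier_vec (n * n)"
  and dim_vec_of_mat [simp]: "dim_vec (vec_of_mat n X) = n * n"
  unfolding vec_of_mat_def by auto

lemma vec_of_mat_index: "k < n * n \<Longrightarrow> vec_of_mat n X $ k = X $$ (k div n, k mod n)"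
  unfolding vec_of_mat_def by simp

lemma vec_of_mat_index_row_major [simp]:
  "i < n \<Longrightarrow> j < n \<Longrightarrow> vec_of_mat n X $ (i * n + j) = X $$ (i, j)"
  by (simp add: vec_of_mat_index row_major_index_less)

lemma mat_of_vec_carrier [simp]: "mat_of_vec n v \<in> carrier_mat n n"
  and dim_mat_of_vec [simp]: "dim_row (mat_of_vec n v) = n" "dim_col (mat_of_vec n v) = n"
  and mat_of_vec_index [simp]: "i < n \<Longrightarrow> j < n \<Longrightarrow> mat_of_vec n v $$ (i, j) = v $ (i * n + j)"
  unfolding mat_of_vec_def by auto

lemma vec_of_mat_of_vec [simp]: "v \<in> carrier_vec (n * n) \<Longrightarrow> vec_of_mat n (mat_of_vec n v) = v"
  by (intro eq_vecI) (auto simp: vec_of_mat_index div_mod_less)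

lemma mat_of_vec_of_mat [simp]: "X \<in> carrier_mat n n \<Longrightarrow> mat_of_vec n (vec_of_mat n X) = X"
  by (intro eq_matI) auto

lemma vec_of_mat_minus:
  "X \<in> carrier_mat n n \<Longrightarrow> Y \<in> carrier_mat n n \<Longrightarrow>
    vec_of_mat n (X - Y) = vec_of_mat n X - vec_of_mat n Y"
  by (intro eq_vecI) (auto simp: vec_of_mat_index div_mod_less)

lemma frob_inner_eq_scalar_prod:
  "X \<in> carrier_mat n n \<Longrightarrow> frob_inner X Y = vec_of_mat n X \<bullet> vec_of_mat n Y"
  unfolding frob_inner_def scalar_prod_def by (simp add: atLeast0LessThan sum_row_major)

lemma Bmat_carrier [simp]: "Bmat n \<in> carrier_mat (2 * n) (n * n)"
  and dim_Bmat [simp]: "dim_row (Bmat n) = 2 * n" "dim_col (Bmat n) = n * n"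
  unfolding Bmat_def by simp_all

lemma sum_lessThan_delta:
  fixes f :: "nat \<Rightarrow> 'a :: comm_semiring_1"
  assumes "a < n"
  shows "(\<Sum>i<n. of_bool (i = a) * f i) = f a"
proof -
  have "{..<n} \<inter> {i. i = a} = {a}" using assms by auto
  then show ?thesis by simp
qed

lemma Bop_index:
  assumes X: "X \<in> carrier_mat n n" and r: "r < 2 * n"
  shows "Bop n X $ r = (\<Sum>i<n. \<Sum>j<n. (if r < n then of_bool (i = r) else of_bool (j = r - n)) * X $$ (i, j))"
proof (cases "r < n")
  case True
  then have "Bop n X $ r = (\<Sum>i<n. of_bool (i = r) * (\<Sum>j<n. X $$ (i, j)))"
    using X by (simp add: Bop_def ones_def scalar_prod_def atLeast0LessThan sum_lessThan_delta)
  then show ?thesis using True by (simp add: sum_distrib_left)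
next
  case False
  then have "Bop n X $ r = (\<Sum>i<n. \<Sum>j<n. of_bool (j = r - n) * X $$ (i, j))"
    using X r by (simp add: Bop_def ones_def scalar_prod_def atLeast0LessThan sum_lessThan_delta)
  then show ?thesis using False by simp
qed

lemma sum_lessThan_delta2:
  fixes f :: "nat \<Rightarrow> nat \<Rightarrow> 'a :: comm_semiring_1"
  assumes "a < n" "b < m"
  shows "(\<Sum>i<n. \<Sum>j<m. of_bool (i = a \<and> j = b) * f i j) = f a b"
proof -
  have "(\<Sum>j<m. of_bool (i = a \<and> j = b) * f i j) = of_bool (i = a) * f i b" for i
    using assms(2) by (cases "i = a") (simp_all add: sum_lessThan_delta)
  then show ?thesis using assms(1) by (simp add: sum_lessThan_delta)
qed

lemma Bmat_index_row_major:
  assumes r: "r < 2 * n" and i: "i < n" and j: "j < n"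
  shows "Bmat n $$ (r, i * n + j) = (if r < n then of_bool (i = r) else of_bool (j = r - n))"
proof -
  define E where "E = mat_of_vec n (unit_vec (n * n) (i * n + j))"
  have E: "E $$ (i', j') = of_bool (i' = i \<and> j' = j)" if "i' < n" "j' < n" for i' j'
    using that i j row_major_index_less[of i' n j'] row_major_index_eq_iff[of j' n j i' i]
    by (auto simp: E_def unit_vec_def)
  have "Bmat n $$ (r, i * n + j) = Bop n E $ r"
    using r row_major_index_less[OF i j] by (simp add: Bmat_def E_def)
  also have "\<dots> = (\<Sum>i'<n. \<Sum>j'<n. of_bool (i' = i \<and> j' = j) *
      (if r < n then of_bool (i' = r) else of_bool (j' = r - n)))"
    using Bop_index[OF _ r, of E] E by (simp add: E_def mult.commute)
  also have "\<dots> = (if r < n then of_bool (i = r) else of_bool (j = r - n))"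
    by (rule sum_lessThan_delta2[OF i j])
  finally show ?thesis .
qed

lemma Bop_eq_Bmat_mult_vec:
  assumes X: "X \<in> carrier_mat n n"
  shows "Bop n X = Bmat n *\<^sub>v vec_of_mat n X"
proof (rule eq_vecI)
  fix r assume "r < dim_vec (Bmat n *\<^sub>v vec_of_mat n X)"
  then have r: "r < 2 * n" by simp
  have "(Bmat n *\<^sub>v vec_of_mat n X) $ r = (\<Sum>k<n * n. Bmat n $$ (r, k) * vec_of_mat n X $ k)"
    using r by (simp add: scalar_prod_def atLeast0LessThan)
  also have "\<dots> = Bop n X $ r"
    using X r by (simp add: sum_row_major Bmat_index_row_major Bop_index)
  finally show "Bop n X $ r = (Bmat n *\<^sub>v vec_of_mat n X) $ r" ..
qed (use X in \<open>simp add: Bop_def ones_def\<close>)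

lemma frob_inner_unit_left:
  assumes "k < n * n" "Z \<in> carrier_mat n n"
  shows "frob_inner (mat_of_vec n (unit_vec (n * n) k)) Z = vec_of_mat n Z $ k"
  using frob_inner_eq_scalar_prod[OF mat_of_vec_carrier, of n "unit_vec (n * n) k" Z] assms
  by simp

lemma Badj_eq:
  assumes y: "y \<in> carrier_vec (2 * n)"
  shows "Badj n y = mat_of_vec n ((Bmat n)\<^sup>T *\<^sub>v y)"
proof -
  define Z0 where "Z0 = mat_of_vec n ((Bmat n)\<^sup>T *\<^sub>v y)"
  have BTy: "(Bmat n)\<^sup>T *\<^sub>v y \<in> carrier_vec (n * n)" by (rule mult_mat_vec_carrier[OF _ y]) simp
  have adj: "Bop n X \<bullet> y = frob_inner X Z0" if X: "X \<in> carrier_mat n n" for X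
  proof -
    have "Bop n X \<bullet> y = y \<bullet> (Bmat n *\<^sub>v vec_of_mat n X)"
      unfolding Bop_eq_Bmat_mult_vec[OF X] by (rule comm_scalar_prod[OF mult_mat_vec_carrier[OF Bmat_carrier vec_of_mat_carrier] y])
    also have "\<dots> = vec_of_mat n X \<bullet> ((Bmat n)\<^sup>T *\<^sub>v y)"
      using transpose_vec_mult_scalar[OF Bmat_carrier vec_of_mat_carrier y] comm_scalar_prod[OF BTy]
      by simp
    finally show ?thesis using X BTy by (simp add: Z0_def frob_inner_eq_scalar_prod)
  qed
  have "Z = Z0" if Z: "Z \<in> carrier_mat n n" "\<forall>X\<in>carrier_mat n n. Bop n X \<bullet> y = frob_inner X Z" for Z
  proof -
    have "vec_of_mat n Z $ k = vec_of_mat n Z0 $ k" if k: "k < n * n" for k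
      using Z adj[of "mat_of_vec n (unit_vec (n * n) k)"] frob_inner_unit_left[OF k]
      by (simp add: Z0_def)
    then have "vec_of_mat n Z = vec_of_mat n Z0" by (intro eq_vecI) auto
    then show ?thesis using Z(1) mat_of_vec_of_mat[OF Z(1)] by (simp add: Z0_def)
  qed
  then have "Badj n y = Z0" unfolding Badj_def using adj
    by (intro the_equality) (auto simp: Z0_def)
  then show ?thesis by (simp add: Z0_def)
qed

section \<open>Nearest points in bounded polyhedra\<close>

lemma dist_sq_eq_sum:
  "(x :: real vec) \<in> carrier_vec N \<Longrightarrow> y \<in> carrier_vec N \<Longrightarrow>
    (x - y) \<bullet> (x - y) = (\<Sum>k<N. (x $ k - y $ k)\<^sup>2)"
  unfolding scalar_prod_def by (simp add: atLeast0LessThan power2_eq_square)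

lemma nearest_point_unique:
  fixes D :: "real vec set"
  assumes D: "D \<subseteq> carrier_vec N" and mid: "\<And>y z. y \<in> D \<Longrightarrow> z \<in> D \<Longrightarrow> (1 / 2) \<cdot>\<^sub>v (y + z) \<in> D"
    and x: "x \<in> carrier_vec N" and y: "y \<in> D" and z: "z \<in> D"
    and y_min: "\<forall>u\<in>D. (x - y) \<bullet> (x - y) \<le> (x - u) \<bullet> (x - u)"
    and z_min: "\<forall>u\<in>D. (x - z) \<bullet> (x - z) \<le> (x - u) \<bullet> (x - u)"
  shows "y = z"
proof -
  have yc: "y \<in> carrier_vec N" and zc: "z \<in> carrier_vec N" using D y z by auto
  define m where "m = (1 / 2) \<cdot>\<^sub>v (y + z)"
  have mc: "m \<in> carrier_vec N" using yc zc by (simp add: m_def)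
  \<comment> \<open>parallelogram law: the midpoint is strictly closer unless the two points coincide\<close>
  have "(x - m) \<bullet> (x - m) = (\<Sum>k<N. (x $ k - y $ k)\<^sup>2 / 2 + (x $ k - z $ k)\<^sup>2 / 2 - (y $ k - z $ k)\<^sup>2 / 4)"
    unfolding dist_sq_eq_sum[OF x mc]
    by (rule sum.cong[OF refl]) (use yc zc in \<open>simp add: m_def power2_eq_square field_simps\<close>)
  also have "\<dots> = (x - y) \<bullet> (x - y) / 2 + (x - z) \<bullet> (x - z) / 2 - (y - z) \<bullet> (y - z) / 4"
    using x yc zc by (simp add: dist_sq_eq_sum sum.distrib sum_subtractf sum_divide_distrib)
  finally have "(x - m) \<bullet> (x - m) = (x - y) \<bullet> (x - y) / 2 + (x - z) \<bullet> (x - z) / 2 - (y - z) \<bullet> (y - z) / 4" .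
  moreover have "(x - y) \<bullet> (x - y) \<le> (x - m) \<bullet> (x - m)" "(x - z) \<bullet> (x - z) \<le> (x - m) \<bullet> (x - m)"
    using y_min z_min mid[OF y z] by (simp_all add: m_def)
  ultimately have "(y - z) \<bullet> (y - z) \<le> 0" by simp
  then have "(y - z) \<bullet> (y - z) = 0" using scalar_prod_self_nonneg[of "y - z"] by simp
  then show ?thesis by (rule eq_of_scalar_prod_minus_self_eq_0[OF yc zc])
qed

lemma closedin_polyhedron_vec:
  fixes A B :: "real mat"
  assumes A: "A \<in> carrier_mat m N" and B: "B \<in> carrier_mat r N" and d: "d \<in> carrier_vec r"
  shows "closedin (product_topology (\<lambda>_. euclideanreal) {..<N})
    {f \<in> topspace (product_topology (\<lambda>_. euclideanreal) {..<N}). vec N f \<in> polyhedron A b B d}"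
    (is "closedin ?X _")
proof -
  have max_0_eq_0_iff: "max 0 t = 0 \<longleftrightarrow> t \<le> 0" for t :: real by (auto simp: max_def)
  define lin where "lin M i f = (\<Sum>k<N. M $$ (i, k) * f k)" for M :: "real mat" and i f
  \<comment> \<open>a continuous function vanishing exactly on the constraint set\<close>
  define h where "h f = (\<Sum>i<m. max 0 (b $ i - lin A i f)) + (\<Sum>j<r. \<bar>lin B j f - d $ j\<bar>)" for f
  have "continuous_map ?X euclideanreal (lin M i)" for M i
    unfolding lin_def by (intro continuous_intros) auto
  then have "continuous_map ?X euclideanreal h"
    unfolding h_def by (intro continuous_intros) auto
  then have "closedin ?X {f \<in> topspace ?X. h f \<in> {0}}"
    by (rule closedin_continuous_map_preimage) simp
  moreover have "vec N f \<in> polyhedron A b B d \<longleftrightarrow> h f = 0" for f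
  proof -
    have "row A i \<bullet> vec N f = lin A i f" if "i < m" for i
      using that A by (simp add: lin_def scalar_prod_def atLeast0LessThan)
    moreover have "B *\<^sub>v vec N f = d \<longleftrightarrow> (\<forall>j<r. lin B j f = d $ j)"
      using B d by (auto simp: vec_eq_iff lin_def scalar_prod_def atLeast0LessThan)
    moreover have "h f = 0 \<longleftrightarrow> (\<forall>i<m. b $ i \<le> lin A i f) \<and> (\<forall>j<r. lin B j f = d $ j)"
      unfolding h_def
      by (simp add: add_nonneg_eq_0_iff sum_nonneg sum_nonneg_eq_0_iff max_0_eq_0_iff Ball_def)
    ultimately show ?thesis using A by (auto simp: polyhedron_def)
  qed
  ultimately show ?thesis by simp
qed

lemma polyhedron_nearest_point_exists:
  fixes A B :: "real mat"
  assumes A: "A \<in> carrier_mat m N" and B: "B \<in> carrier_mat r N" and x: "x \<in> carrier_vec N"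
    and ne: "polyhedron A b B d \<noteq> {}"
    and bounded: "\<And>y k. y \<in> polyhedron A b B d \<Longrightarrow> k < N \<Longrightarrow> \<bar>y $ k\<bar> \<le> c"
  shows "\<exists>y\<in>polyhedron A b B d. \<forall>z\<in>polyhedron A b B d. (x - y) \<bullet> (x - y) \<le> (x - z) \<bullet> (x - z)"
proof -
  let ?P = "polyhedron A b B d"
  let ?X = "product_topology (\<lambda>_::nat. euclideanreal) {..<N}"
  from ne obtain y0 where "y0 \<in> ?P" by blast
  then have "y0 \<in> carrier_vec N" "d = B *\<^sub>v y0" using A by (auto simp: polyhedron_def)
  then have d: "d \<in> carrier_vec r" using mult_mat_vec_carrier[OF B] by simp
  define \<phi> where "\<phi> f = (\<Sum>k<N. (x $ k - f k)\<^sup>2)" for f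
  define K where "K = PiE {..<N} (\<lambda>_. {-c..c}) \<inter> {f \<in> topspace ?X. vec N f \<in> ?P}"
  have "compactin ?X K"
    unfolding K_def by (intro compact_Int_closedin closedin_polyhedron_vec[OF A B d]) (simp add: compactin_PiE)
  moreover have "continuous_map ?X euclideanreal \<phi>"
    unfolding \<phi>_def by (intro continuous_intros) auto
  ultimately have cpt: "compact (\<phi> ` K)" using image_compactin by fastforce
  have \<phi>_vec: "\<phi> f = (x - vec N f) \<bullet> (x - vec N f)" for f
    using x by (simp add: \<phi>_def dist_sq_eq_sum)
  have K_P: "vec N f \<in> ?P" if "f \<in> K" for f using that by (simp add: K_def)
  have P_K: "restrict (\<lambda>k. z $ k) {..<N} \<in> K"
    and \<phi>_restrict: "\<phi> (restrict (\<lambda>k. z $ k) {..<N}) = (x - z) \<bullet> (x - z)" if z: "z \<in> ?P" for z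
  proof -
    have zc: "z \<in> carrier_vec N" using z A by (simp add: polyhedron_def)
    have "vec N (restrict (\<lambda>k. z $ k) {..<N}) = z" using zc by (intro eq_vecI) auto
    moreover have "z $ k \<in> {-c..c}" if "k < N" for k
      using bounded[OF z that] by (metis abs_le_iff atLeastAtMost_iff minus_le_iff)
    ultimately show "restrict (\<lambda>k. z $ k) {..<N} \<in> K"
      and "\<phi> (restrict (\<lambda>k. z $ k) {..<N}) = (x - z) \<bullet> (x - z)"
      using z \<phi>_vec by (auto simp: K_def)
  qed
  then have "\<phi> ` K \<noteq> {}" using ne by blast
  then obtain f where f: "f \<in> K" and f_min: "\<forall>g\<in>K. \<phi> f \<le> \<phi> g"
    using compact_attains_inf[OF cpt] by blast
  show ?thesis
  proof (intro bexI[OF _ K_P[OF f]] ballI)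
    fix z assume z: "z \<in> ?P"
    then have "\<phi> f \<le> \<phi> (restrict (\<lambda>k. z $ k) {..<N})" using f_min P_K by blast
    then show "(x - vec N f) \<bullet> (x - vec N f) \<le> (x - z) \<bullet> (x - z)"
      unfolding \<phi>_restrict[OF z] \<phi>_vec[of f] .
  qed
qed

lemma polyhedron_midpoint:
  fixes A B :: "real mat"
  assumes A: "A \<in> carrier_mat m N" and B: "B \<in> carrier_mat r N"
    and y: "y \<in> polyhedron A b B d" and z: "z \<in> polyhedron A b B d"
  shows "(1 / 2) \<cdot>\<^sub>v (y + z) \<in> polyhedron A b B d"
proof -
  have yc: "y \<in> carrier_vec N" and zc: "z \<in> carrier_vec N"
    and Ay: "\<forall>i<m. b $ i \<le> row A i \<bullet> y" and Az: "\<forall>i<m. b $ i \<le> row A i \<bullet> z"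
    and By: "B *\<^sub>v y = d" and Bz: "B *\<^sub>v z = d"
    using y z A by (auto simp: polyhedron_def)
  have "row A i \<bullet> ((1 / 2) \<cdot>\<^sub>v (y + z)) = (row A i \<bullet> y + row A i \<bullet> z) / 2" if "i < m" for i
    using that A yc zc by (simp add: scalar_prod_add_distrib[of _ N])
  moreover have "B *\<^sub>v ((1 / 2) \<cdot>\<^sub>v (y + z)) = (1 / 2) \<cdot>\<^sub>v (B *\<^sub>v y + B *\<^sub>v z)"
    using B yc zc by (simp add: mult_mat_vec mult_add_distrib_mat_vec)
  moreover have "(1 / 2) \<cdot>\<^sub>v (d + d) = d" by (intro eq_vecI) auto
  ultimately show ?thesis using Ay Az By Bz A yc zc by (fastforce simp: polyhedron_def)
qed

lemma euclid_proj_polyhedron: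
  fixes A B :: "real mat"
  assumes A: "A \<in> carrier_mat m N" and B: "B \<in> carrier_mat r N" and x: "x \<in> carrier_vec N"
    and ne: "polyhedron A b B d \<noteq> {}"
    and bounded: "\<And>y k. y \<in> polyhedron A b B d \<Longrightarrow> k < N \<Longrightarrow> \<bar>y $ k\<bar> \<le> c"
  shows "euclid_proj (polyhedron A b B d) x \<in> polyhedron A b B d"
    and "\<forall>z\<in>polyhedron A b B d. (x - euclid_proj (polyhedron A b B d) x) \<bullet> (x - euclid_proj (polyhedron A b B d) x)
           \<le> (x - z) \<bullet> (x - z)"
proof -
  let ?P = "polyhedron A b B d"
  have "?P \<subseteq> carrier_vec N" using A by (auto simp: polyhedron_def)
  then have "\<exists>!y. y \<in> ?P \<and> (\<forall>z\<in>?P. (x - y) \<bullet> (x - y) \<le> (x - z) \<bullet> (x - z))"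
    using polyhedron_nearest_point_exists[OF A B x ne bounded]
      nearest_point_unique[of ?P N, OF _ polyhedron_midpoint[OF A B] x] by blast
  then have "euclid_proj ?P x \<in> ?P \<and>
      (\<forall>z\<in>?P. (x - euclid_proj ?P x) \<bullet> (x - euclid_proj ?P x) \<le> (x - z) \<bullet> (x - z))"
    unfolding euclid_proj_def by (rule theI')
  then show "euclid_proj ?P x \<in> ?P"
    and "\<forall>z\<in>?P. (x - euclid_proj ?P x) \<bullet> (x - euclid_proj ?P x) \<le> (x - z) \<bullet> (x - z)"
    by blast+
qed

section \<open>The Birkhoff polytope\<close>

lemma ones_append: "ones (2 * n) = ones n @\<^sub>v ones n"
  unfolding ones_def by (intro eq_vecI) auto

lemma Bop_eq_ones_iff:
  assumes "X \<in> carrier_mat n n"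
  shows "Bop n X = ones (2 * n) \<longleftrightarrow> X *\<^sub>v ones n = ones n \<and> X\<^sup>T *\<^sub>v ones n = ones n"
  unfolding Bop_def ones_append using assms by (simp add: append_vec_eq[of _ n] ones_def)

lemma mem_birkhoff_polyhedron_iff:
  "y \<in> polyhedron (1\<^sub>m (n * n)) (0\<^sub>v (n * n)) (Bmat n) (ones (2 * n)) \<longleftrightarrow>
    y \<in> carrier_vec (n * n) \<and> mat_of_vec n y \<in> birkhoff n"
proof (cases "y \<in> carrier_vec (n * n)")
  case True
  have "Bmat n *\<^sub>v y = Bop n (mat_of_vec n y)"
    using Bop_eq_Bmat_mult_vec[OF mat_of_vec_carrier] True by simp
  moreover have "(\<forall>k<n * n. 0 \<le> y $ k) \<longleftrightarrow> (\<forall>i<n. \<forall>j<n. 0 \<le> mat_of_vec n y $$ (i, j))"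
    by (metis div_mod_less div_mult_mod_eq mat_of_vec_index row_major_index_less)
  ultimately show ?thesis using True Bop_eq_ones_iff[OF mat_of_vec_carrier]
    by (auto simp: polyhedron_def birkhoff_def scalar_prod_left_unit)
qed (simp add: polyhedron_def)

lemma birkhoff_index_le_1:
  assumes M: "M \<in> birkhoff n" and i: "i < n" and j: "j < n"
  shows "M $$ (i, j) \<le> 1"
proof -
  have Mc: "M \<in> carrier_mat n n" using M by (simp add: birkhoff_def)
  have "(M *\<^sub>v ones n) $ i = 1" using M i by (simp add: birkhoff_def ones_def)
  moreover have "(M *\<^sub>v ones n) $ i = (\<Sum>j'<n. M $$ (i, j'))"
    using Mc i by (simp add: ones_def scalar_prod_def atLeast0LessThan)
  ultimately have "(\<Sum>j'<n. M $$ (i, j')) = 1" by simp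
  moreover have "M $$ (i, j) \<le> (\<Sum>j'<n. M $$ (i, j'))"
    using M i j by (intro member_le_sum) (auto simp: birkhoff_def)
  ultimately show ?thesis by simp
qed

lemma uniform_mat_mem_birkhoff: "mat n n (\<lambda>_. 1 / real n) \<in> birkhoff n"
  unfolding birkhoff_def by (auto simp: ones_def scalar_prod_def intro!: eq_vecI)

lemma euclid_proj_birkhoff_polyhedron:
  assumes x: "x \<in> carrier_vec (n * n)"
  defines "P \<equiv> polyhedron (1\<^sub>m (n * n)) (0\<^sub>v (n * n)) (Bmat n) (ones (2 * n))"
  shows "euclid_proj P x \<in> P" and "\<forall>z\<in>P. (x - euclid_proj P x) \<bullet> (x - euclid_proj P x) \<le> (x - z) \<bullet> (x - z)"
proof -
  have "vec_of_mat n (mat n n (\<lambda>_. 1 / real n)) \<in> P"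
    using mem_birkhoff_polyhedron_iff uniform_mat_mem_birkhoff by (simp add: P_def)
  then have ne: "P \<noteq> {}" by blast
  have bounded: "\<bar>y $ k\<bar> \<le> 1" if y: "y \<in> P" and k: "k < n * n" for y k
  proof -
    have "y $ k = mat_of_vec n y $$ (k div n, k mod n)" using div_mod_less[OF k] by simp
    also have "\<dots> \<le> 1"
      using y[unfolded P_def] mem_birkhoff_polyhedron_iff div_mod_less[OF k]
      by (blast intro: birkhoff_index_le_1)
    finally show ?thesis using y k by (auto simp: P_def polyhedron_def scalar_prod_left_unit)
  qed
  show "euclid_proj P x \<in> P" and "\<forall>z\<in>P. (x - euclid_proj P x) \<bullet> (x - euclid_proj P x) \<le> (x - z) \<bullet> (x - z)"
    using euclid_proj_polyhedron[OF one_carrier_mat Bmat_carrier x ne[unfolded P_def] bounded[unfolded P_def]]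
    by (simp_all add: P_def)
qed

lemma vec_of_mat_proj_birkhoff:
  assumes G: "G \<in> carrier_mat n n"
  shows "vec_of_mat n (proj_birkhoff n G)
    = euclid_proj (polyhedron (1\<^sub>m (n * n)) (0\<^sub>v (n * n)) (Bmat n) (ones (2 * n))) (vec_of_mat n G)"
proof -
  let ?P = "polyhedron (1\<^sub>m (n * n)) (0\<^sub>v (n * n)) (Bmat n) (ones (2 * n))"
  let ?p = "euclid_proj ?P (vec_of_mat n G)"
  have birkhoff_iff: "Z \<in> birkhoff n \<longleftrightarrow> Z \<in> carrier_mat n n \<and> vec_of_mat n Z \<in> ?P" for Z
    using mem_birkhoff_polyhedron_iff[of "vec_of_mat n Z" n] by (auto simp: birkhoff_def)
  note proj = euclid_proj_birkhoff_polyhedron[OF vec_of_mat_carrier[of n G]]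
  have pc: "?p \<in> carrier_vec (n * n)" using proj(1) mem_birkhoff_polyhedron_iff by blast
  have dist: "frob_inner (G - Z) (G - Z) = (vec_of_mat n G - vec_of_mat n Z) \<bullet> (vec_of_mat n G - vec_of_mat n Z)"
    if "Z \<in> carrier_mat n n" for Z
    using frob_inner_eq_scalar_prod[OF minus_carrier_mat[OF that], of G "G - Z"] vec_of_mat_minus[OF G that]
    by simp
  have "proj_birkhoff n G = mat_of_vec n ?p"
    unfolding proj_birkhoff_def
  proof (rule the_equality)
    show "mat_of_vec n ?p \<in> birkhoff n \<and> (\<forall>Z\<in>birkhoff n.
        frob_inner (G - mat_of_vec n ?p) (G - mat_of_vec n ?p) \<le> frob_inner (G - Z) (G - Z))"
      using proj pc birkhoff_iff dist by auto
  next
    fix Y assume Y: "Y \<in> birkhoff n \<and> (\<forall>Z\<in>birkhoff n. frob_inner (G - Y) (G - Y) \<le> frob_inner (G - Z) (G - Z))"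
    have "vec_of_mat n Y = ?p"
    proof (rule nearest_point_unique[OF _ polyhedron_midpoint[OF one_carrier_mat Bmat_carrier]
          vec_of_mat_carrier _ proj(1) _ proj(2)])
      show "?P \<subseteq> carrier_vec (n * n)" by (auto simp: polyhedron_def)
      show "vec_of_mat n Y \<in> ?P" using Y birkhoff_iff by blast
      show "\<forall>z\<in>?P. (vec_of_mat n G - vec_of_mat n Y) \<bullet> (vec_of_mat n G - vec_of_mat n Y)
          \<le> (vec_of_mat n G - z) \<bullet> (vec_of_mat n G - z)"
        using Y birkhoff_iff dist mem_birkhoff_polyhedron_iff by (metis vec_of_mat_of_vec)
    qed
    moreover have "Y \<in> carrier_mat n n" using Y by (simp add: birkhoff_def)
    ultimately show "Y = mat_of_vec n ?p" by (metis mat_of_vec_of_mat)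
  qed
  then show ?thesis using pc by simp
qed

section \<open>The operator P\<close>

lemma Xi_carrier [simp]: "Xi n G H \<in> carrier_mat n n"
  unfolding Xi_def by (rule minus_carrier_mat) simp

lemma Pop_carrier [simp]: "Pop n G H \<in> carrier_mat n n"
  unfolding Pop_def by (rule minus_carrier_mat[OF Xi_carrier])

definition proj_support :: "nat \<Rightarrow> real mat \<Rightarrow> nat set" where
  "proj_support n G = {k. vec_of_mat n (proj_birkhoff n G) $ k \<noteq> 0}"

lemma vec_of_mat_Xi:
  assumes H: "H \<in> carrier_mat n n"
  shows "vec_of_mat n (Xi n G H)
    = mask_mat (n * n) (proj_support n G) *\<^sub>v vec_of_mat n H"
proof (rule eq_vecI)
  fix k assume "k < dim_vec (mask_mat (n * n) (proj_support n G) *\<^sub>v vec_of_mat n H)"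
  then have k: "k < n * n" by simp
  then show "vec_of_mat n (Xi n G H) $ k
      = (mask_mat (n * n) (proj_support n G) *\<^sub>v vec_of_mat n H) $ k"
    using H div_mod_less[OF k] by (simp add: mask_mat_mult_vec vec_of_mat_index Xi_def Theta_def proj_support_def)
qed simp

lemma op_mat_eqI:
  assumes M: "M \<in> carrier_mat m m" and L: "\<And>y. y \<in> carrier_vec m \<Longrightarrow> L y = M *\<^sub>v y"
  shows "op_mat m L = M"
  using M L[OF unit_vec_carrier] by (intro eq_matI) (auto simp: op_mat_def)

lemma Bop_Xi_Badj:
  fixes n :: nat and G :: "real mat"
  defines "F \<equiv> Bmat n * mask_mat (n * n) (proj_support n G)"
  assumes y: "y \<in> carrier_vec (2 * n)"
  shows "Bop n (Xi n G (Badj n y)) = (F * F\<^sup>T) *\<^sub>v y"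
proof -
  define D where "D = mask_mat (n * n) (proj_support n G)"
  have D: "D \<in> carrier_mat (n * n) (n * n)" by (simp add: D_def)
  have BT: "(Bmat n)\<^sup>T \<in> carrier_mat (n * n) (2 * n)" by simp
  have u: "(Bmat n)\<^sup>T *\<^sub>v y \<in> carrier_vec (n * n)" by (rule mult_mat_vec_carrier[OF BT y])
  have FT: "F\<^sup>T = D * (Bmat n)\<^sup>T"
    using transpose_mult[OF Bmat_carrier D] by (simp add: F_def D_def)
  have "Bop n (Xi n G (Badj n y)) = Bmat n *\<^sub>v vec_of_mat n (Xi n G (Badj n y))"
    by (rule Bop_eq_Bmat_mult_vec[OF Xi_carrier])
  also have "\<dots> = Bmat n *\<^sub>v (D *\<^sub>v (D *\<^sub>v ((Bmat n)\<^sup>T *\<^sub>v y)))"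
    using vec_of_mat_Xi[OF mat_of_vec_carrier] Badj_eq[OF y] u mask_mat_mult_vec_idem[OF u]
    by (simp add: D_def)
  also have "\<dots> = (F * F\<^sup>T) *\<^sub>v y"
  proof -
    have F: "F \<in> carrier_mat (2 * n) (n * n)"
      unfolding F_def D_def[symmetric] by (rule mult_carrier_mat[OF Bmat_carrier D])
    have Du: "D *\<^sub>v ((Bmat n)\<^sup>T *\<^sub>v y) \<in> carrier_vec (n * n)" using D u by simp
    have "(F * F\<^sup>T) *\<^sub>v y = F *\<^sub>v (D *\<^sub>v ((Bmat n)\<^sup>T *\<^sub>v y))"
      unfolding FT using assoc_mult_mat_vec[OF F mult_carrier_mat[OF D BT] y] assoc_mult_mat_vec[OF D BT y]
      by simp
    also have "\<dots> = Bmat n *\<^sub>v (D *\<^sub>v (D *\<^sub>v ((Bmat n)\<^sup>T *\<^sub>v y)))"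
      unfolding F_def D_def[symmetric] by (rule assoc_mult_mat_vec[OF Bmat_carrier D Du])
    finally show ?thesis ..
  qed
  finally show ?thesis .
qed

lemma vec_of_mat_Pop:
  fixes n :: nat and G H :: "real mat"
  defines "D \<equiv> mask_mat (n * n) (proj_support n G)"
  defines "F \<equiv> Bmat n * mask_mat (n * n) (proj_support n G)"
  assumes H: "H \<in> carrier_mat n n"
  shows "vec_of_mat n (Pop n G H)
    = D *\<^sub>v vec_of_mat n H - D *\<^sub>v ((Bmat n)\<^sup>T *\<^sub>v (pinv (F * F\<^sup>T) *\<^sub>v (F *\<^sub>v vec_of_mat n H)))"
proof -
  have D: "D \<in> carrier_mat (n * n) (n * n)" by (simp add: D_def)
  have F: "F \<in> carrier_mat (2 * n) (n * n)"
    unfolding F_def D_def[symmetric] by (rule mult_carrier_mat[OF Bmat_carrier D])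
  have FF: "F * F\<^sup>T \<in> carrier_mat (2 * n) (2 * n)" using F by simp
  define z where "z = pinv (F * F\<^sup>T) *\<^sub>v (F *\<^sub>v vec_of_mat n H)"
  have z: "z \<in> carrier_vec (2 * n)" using pinv_carrier[OF FF] F by (simp add: z_def)
  have u: "(Bmat n)\<^sup>T *\<^sub>v z \<in> carrier_vec (n * n)" by (rule mult_mat_vec_carrier[OF _ z]) simp
  have op: "op_mat (2 * n) (\<lambda>y. Bop n (Xi n G (Badj n y))) = F * F\<^sup>T"
    using FF by (rule op_mat_eqI) (simp add: Bop_Xi_Badj F_def)
  have Bop_Xi: "Bop n (Xi n G H) = F *\<^sub>v vec_of_mat n H"
    using Bop_eq_Bmat_mult_vec[OF Xi_carrier] vec_of_mat_Xi[OF H] assoc_mult_mat_vec[OF Bmat_carrier D]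
    by (simp add: F_def D_def)
  have "op_pinv (2 * n) (\<lambda>y. Bop n (Xi n G (Badj n y))) (Bop n (Xi n G H)) = z"
    unfolding op_pinv_def op Bop_Xi z_def ..
  then have "Pop n G H = Xi n G H - Xi n G (Badj n z)" by (simp add: Pop_def)
  also have "Badj n z = mat_of_vec n ((Bmat n)\<^sup>T *\<^sub>v z)" by (rule Badj_eq[OF z])
  finally have "Pop n G H = Xi n G H - Xi n G (mat_of_vec n ((Bmat n)\<^sup>T *\<^sub>v z))" .
  then show ?thesis
    using vec_of_mat_minus[OF Xi_carrier Xi_carrier] vec_of_mat_Xi[OF H] vec_of_mat_Xi[OF mat_of_vec_carrier] u
    by (simp add: D_def z_def)
qed

lemma mat_kernel_active_constraint_birkhoff:
  assumes G: "G \<in> carrier_mat n n"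
  shows "mat_kernel (active_constraint_mat (1\<^sub>m (n * n)) (0\<^sub>v (n * n)) (Bmat n) (ones (2 * n)) (vec_of_mat n G))
    = masked_kernel (Bmat n) (proj_support n G)"
proof -
  let ?act = "active_set (1\<^sub>m (n * n)) (0\<^sub>v (n * n)) (Bmat n) (ones (2 * n)) (vec_of_mat n G)"
  let ?ks = "filter (\<lambda>i. i \<in> ?act) [0..<n * n]"
  have "?act = {k. k < n * n \<and> k \<notin> proj_support n G}"
    using vec_of_mat_proj_birkhoff[OF G, symmetric]
    by (auto simp: active_set_def proj_support_def scalar_prod_left_unit)
  then have ks: "set ?ks = {k. k < n * n \<and> k \<notin> proj_support n G}" by auto
  have "active_constraint_mat (1\<^sub>m (n * n)) (0\<^sub>v (n * n)) (Bmat n) (ones (2 * n)) (vec_of_mat n G)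
      = mat_of_rows (n * n) (map (unit_vec (n * n)) ?ks @ rows (Bmat n))"
  proof -
    have "map (row (1\<^sub>m (n * n))) ?ks = map (unit_vec (n * n)) ?ks" by (rule map_cong) auto
    then show ?thesis unfolding active_constraint_mat_def index_one_mat(2,3)
      by (rule arg_cong[where f = "\<lambda>rs. mat_of_rows (n * n) (rs @ rows (Bmat n))"])
  qed
  moreover have "set ?ks \<subseteq> {..<n * n}" by auto
  ultimately show ?thesis
    using mat_kernel_unit_rows_append[OF Bmat_carrier] ks mem_masked_kernel_iff[OF Bmat_carrier] by auto
qed

lemma is_orth_proj_Pop:
  assumes "H \<in> carrier_mat n n"
  shows "is_orth_proj (masked_kernel (Bmat n) (proj_support n G)) (vec_of_mat n H) (vec_of_mat n (Pop n G H))"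
  unfolding vec_of_mat_Pop[OF assms] by (rule is_orth_proj_masked_kernel[OF Bmat_carrier vec_of_mat_carrier])

lemma is_orth_proj_hs_jacobian_birkhoff:
  assumes "G \<in> carrier_mat n n"
  shows "is_orth_proj (masked_kernel (Bmat n) (proj_support n G)) (vec_of_mat n H)
    (hs_jacobian (1\<^sub>m (n * n)) (0\<^sub>v (n * n)) (Bmat n) (ones (2 * n)) (vec_of_mat n G) *\<^sub>v vec_of_mat n H)"
proof -
  have "vec_of_mat n H \<in> carrier_vec (dim_col (1\<^sub>m (n * n)))" by simp
  from is_orth_proj_hs_jacobian[OF this, of "0\<^sub>v (n * n)" "Bmat n" "ones (2 * n)" "vec_of_mat n G"]
  show ?thesis unfolding mat_kernel_active_constraint_birkhoff[OF assms] .
qed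

theorem proposition3p1:
  fixes n :: nat and G :: "real mat"
  assumes "G \<in> carrier_mat n n"
  shows "(\<forall>H\<in>carrier_mat n n.
            vec_of_mat n (Pop n G H) =
            hs_jacobian (1\<^sub>m (n * n)) (0\<^sub>v (n * n)) (Bmat n) (ones (2 * n)) (vec_of_mat n G)
              *\<^sub>v vec_of_mat n H)
       \<and> (\<forall>H\<in>carrier_mat n n. \<forall>K\<in>carrier_mat n n.
            frob_inner (Pop n G H) K = frob_inner H (Pop n G K))
       \<and> (\<forall>H\<in>carrier_mat n n. frob_inner (Pop n G H) H \<ge> 0)"
proof -
  let ?V = "masked_kernel (Bmat n) (proj_support n G)"
  have V: "?V \<subseteq> carrier_vec (n * n)" by (auto simp: masked_kernel_def mat_kernel_def)
  note Pop = is_orth_proj_Pop[of _ n G] and J = is_orth_proj_hs_jacobian_birkhoff[OF assms]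
  show ?thesis
  proof (intro conjI ballI)
    fix H :: "real mat" assume H: "H \<in> carrier_mat n n"
    show "vec_of_mat n (Pop n G H) = hs_jacobian (1\<^sub>m (n * n)) (0\<^sub>v (n * n)) (Bmat n) (ones (2 * n))
        (vec_of_mat n G) *\<^sub>v vec_of_mat n H"
      by (rule is_orth_proj_unique[OF V masked_kernel_minus vec_of_mat_carrier Pop[OF H] J])
  next
    fix H K :: "real mat" assume H: "H \<in> carrier_mat n n" and K: "K \<in> carrier_mat n n"
    show "frob_inner (Pop n G H) K = frob_inner H (Pop n G K)"
      using is_orth_proj_symmetric[OF V vec_of_mat_carrier vec_of_mat_carrier Pop[OF H] Pop[OF K]]
      by (simp add: frob_inner_eq_scalar_prod[OF Pop_carrier] frob_inner_eq_scalar_prod[OF H])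
  next
    fix H :: "real mat" assume H: "H \<in> carrier_mat n n"
    show "frob_inner (Pop n G H) H \<ge> 0"
      using is_orth_proj_nonneg[OF V vec_of_mat_carrier Pop[OF H]]
      by (simp add: frob_inner_eq_scalar_prod[OF Pop_carrier])
  qed
qed

end
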